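(* Let $g_1,g_2$ be holomorphic functions on a domain $\mathcal{D}\subset\mathbb{C}$ with $g_1'g_2'\neq0$, let $\sqrt{g_1'g_2'}$ be a holomorphic branch, let $\Phi=\bigl(\tfrac{\mathrm{i}}{2}\tfrac{g_1g_2+1}{\sqrt{g_1'g_2'}},\ \tfrac12\tfrac{g_1g_2-1}{\sqrt{g_1'g_2'}},\ \tfrac12\tfrac{g_1+g_2}{\sqrt{g_1'g_2'}},\ \tfrac{\mathrm{i}}{2}\tfrac{g_1-g_2}{\sqrt{g_1'g_2'}}\bigr)$, let $\Psi$ be holomorphic on $\mathcal{D}$ with $\Psi'=\Phi$, and let $\mathcal{M}$ be the minimal surface $\mathrm{x}(u,v)=\operatorname{Re}\Psi(u+\mathrm{i}v)$ in $\mathbb{R}^4$. Then its first fundamental form is $E(du^2+dv^2)$ with $$E=\frac{(|g_1|^2+1)(|g_2|^2+1)}{4|g_1'g_2'|},$$ and its Gauss curvature $K$ and normal curvature $\varkappa$ are $$K=\frac{-8|g_1'g_2'|}{(|g_1|^2+1)(|g_2|^2+1)}\left(\frac{|g_1'|^2}{(|g_1|^2+1)^2}+\frac{|g_2'|^2}{(|g_2|^2+1)^2}\right),$$ $$\varkappa=\frac{8|g_1'g_2'|}{(|g_1|^2+1)(|g_2|^2+1)}\left(\frac{|g_1'|^2}{(|g_1|^2+1)^2}-\frac{|g_2'|^2}{(|g_2|^2+1)^2}\right).$$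
   Context: The normal curvature is defined as follows: let $X_1=\mathrm{x}_u/\|\mathrm{x}_u\|$, $X_2=\mathrm{x}_v/\|\mathrm{x}_v\|$, and let $n_1,n_2$ be orthonormal normal vector fields such that $(X_1,X_2,n_1,n_2)$ is a positively oriented orthonormal basis of $\mathbb{R}^4$ (standard orientation); with $A_n$ the Weingarten operator, $\varkappa=A_{n_1}X_1\cdot A_{n_2}X_2-A_{n_2}X_1\cdot A_{n_1}X_2$. *)

theory Defs
  imports "HOL-Analysis.Analysis"
begin

text \<open>A parametrised surface is a map x from (an open subset of) the complex plane,
  identified with the (u,v)-plane via z = u + i v, into R^4.\<close>

definition pdu :: "(complex \<Rightarrow> real^4) \<Rightarrow> complex \<Rightarrow> real^4" where
  "pdu f z = frechet_derivative f (at z) 1"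

definition pdv :: "(complex \<Rightarrow> real^4) \<Rightarrow> complex \<Rightarrow> real^4" where
  "pdv f z = frechet_derivative f (at z) \<i>"

definition fff_E :: "(complex \<Rightarrow> real^4) \<Rightarrow> complex \<Rightarrow> real" where
  "fff_E x z = pdu x z \<bullet> pdu x z"
definition fff_F :: "(complex \<Rightarrow> real^4) \<Rightarrow> complex \<Rightarrow> real" where
  "fff_F x z = pdu x z \<bullet> pdv x z"
definition fff_G :: "(complex \<Rightarrow> real^4) \<Rightarrow> complex \<Rightarrow> real" where
  "fff_G x z = pdv x z \<bullet> pdv x z"

definition tan_proj :: "(complex \<Rightarrow> real^4) \<Rightarrow> complex \<Rightarrow> real^4 \<Rightarrow> real^4" where
  "tan_proj x z w =
     (let E = fff_E x z; F = fff_F x z; G = fff_G x z;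
          a = w \<bullet> pdu x z; b = w \<bullet> pdv x z
      in ((G * a - F * b) / (E * G - F\<^sup>2)) *\<^sub>R pdu x z
         + ((E * b - F * a) / (E * G - F\<^sup>2)) *\<^sub>R pdv x z)"

definition nor_proj :: "(complex \<Rightarrow> real^4) \<Rightarrow> complex \<Rightarrow> real^4 \<Rightarrow> real^4" where
  "nor_proj x z w = w - tan_proj x z w"

text \<open>Gauss curvature via the second fundamental form (Gauss equation):
  K = (<sigma(x_u,x_u), sigma(x_v,x_v)> - |sigma(x_u,x_v)|^2) / (EG - F^2).\<close>
definition gauss_curvature :: "(complex \<Rightarrow> real^4) \<Rightarrow> complex \<Rightarrow> real" where
  "gauss_curvature x z =
     (nor_proj x z (pdu (pdu x) z) \<bullet> nor_proj x z (pdv (pdv x) z)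
      - nor_proj x z (pdv (pdu x) z) \<bullet> nor_proj x z (pdv (pdu x) z))
     / (fff_E x z * fff_G x z - (fff_F x z)\<^sup>2)"

definition unitX1 :: "(complex \<Rightarrow> real^4) \<Rightarrow> complex \<Rightarrow> real^4" where
  "unitX1 x z = (1 / norm (pdu x z)) *\<^sub>R pdu x z"
definition unitX2 :: "(complex \<Rightarrow> real^4) \<Rightarrow> complex \<Rightarrow> real^4" where
  "unitX2 x z = (1 / norm (pdv x z)) *\<^sub>R pdv x z"

text \<open>Weingarten operator A_n applied to X1 and X2:
  A_n X = - (D_X n)^T (tangential part of the derivative of the normal field n
  in direction X), where D_{X1} n = n_u/|x_u| and D_{X2} n = n_v/|x_v|.\<close>
definition weingarten_X1 :: "(complex \<Rightarrow> real^4) \<Rightarrow> (complex \<Rightarrow> real^4) \<Rightarrow> complex \<Rightarrow> real^4" where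
  "weingarten_X1 x n z = - tan_proj x z ((1 / norm (pdu x z)) *\<^sub>R pdu n z)"
definition weingarten_X2 :: "(complex \<Rightarrow> real^4) \<Rightarrow> (complex \<Rightarrow> real^4) \<Rightarrow> complex \<Rightarrow> real^4" where
  "weingarten_X2 x n z = - tan_proj x z ((1 / norm (pdv x z)) *\<^sub>R pdv n z)"

definition normal_curvature ::
  "(complex \<Rightarrow> real^4) \<Rightarrow> (complex \<Rightarrow> real^4) \<Rightarrow> (complex \<Rightarrow> real^4) \<Rightarrow> complex \<Rightarrow> real" where
  "normal_curvature x n1 n2 z =
     weingarten_X1 x n1 z \<bullet> weingarten_X2 x n2 z - weingarten_X1 x n2 z \<bullet> weingarten_X2 x n1 z"

definition pos_oriented :: "real^4 \<Rightarrow> real^4 \<Rightarrow> real^4 \<Rightarrow> real^4 \<Rightarrow> bool" where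
  "pos_oriented a b c d \<longleftrightarrow> det (vector [a, b, c, d] :: real^4^4) > 0"

definition orthonormal4 :: "real^4 \<Rightarrow> real^4 \<Rightarrow> real^4 \<Rightarrow> real^4 \<Rightarrow> bool" where
  "orthonormal4 a b c d \<longleftrightarrow>
     (\<forall>p\<in>{(a,a),(b,b),(c,c),(d,d)}. fst p \<bullet> snd p = 1) \<and>
     (\<forall>p\<in>{(a,b),(a,c),(a,d),(b,c),(b,d),(c,d)}. fst p \<bullet> snd p = 0)"

end

theory Submission
  imports Defs
begin

text \<open>Since \<open>\<Psi>' = \<Phi>\<close> is holomorphic, \<open>x\<^sub>u = Re \<Phi>\<close>, \<open>x\<^sub>v = Re (\<i>\<Phi>)\<close>, and the second
  derivatives of \<open>x\<close> are \<open>Re \<Phi>'\<close>, \<open>Re (\<i>\<Phi>')\<close> and \<open>-Re \<Phi>'\<close>. The isotropy \<open>\<Sigma> \<Phi>\<^sub>k\<^sup>2 = 0\<close> of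
  the Weierstrass curve makes the parametrisation conformal with \<open>E = |\<Phi>|\<^sup>2/2\<close>; differentiating
  it gives \<open>\<Sigma> \<Phi>\<^sub>k\<Phi>'\<^sub>k = 0\<close>, and then the Gauss equation and the Weingarten equations express
  \<open>K\<close> and \<open>\<kappa>\<close> as \<open>-4/|\<Phi>|\<^sup>6\<close> times the Hermitian Gram determinant of \<open>\<Phi>, \<Phi>'\<close> and times
  \<open>det(\<Phi>, conj \<Phi>, \<Phi>', conj \<Phi>')\<close> respectively. Both are unchanged when \<open>\<Phi>'\<close> is shifted by a
  multiple of \<open>\<Phi>\<close> and scale by \<open>|\<lambda>|\<^sup>4\<close> under \<open>(\<Phi>, \<Phi>') \<mapsto> (\<lambda>\<Phi>, \<lambda>\<Phi>')\<close>, so for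
  \<open>\<Phi> = V(g\<^sub>1,g\<^sub>2)/\<surd>(g\<^sub>1'g\<^sub>2')\<close> they reduce to polynomial identities in \<open>g\<^sub>1, g\<^sub>2, g\<^sub>1', g\<^sub>2'\<close>.\<close>

lemma det_4:
  "det (A::'a::comm_ring_1^4^4) =
       A$1$1 * A$2$2 * A$3$3 * A$4$4 - A$1$1 * A$2$2 * A$3$4 * A$4$3 - A$1$1 * A$2$3 * A$3$2 * A$4$4
       + A$1$1 * A$2$3 * A$3$4 * A$4$2 + A$1$1 * A$2$4 * A$3$2 * A$4$3 - A$1$1 * A$2$4 * A$3$3 * A$4$2
       - A$1$2 * A$2$1 * A$3$3 * A$4$4 + A$1$2 * A$2$1 * A$3$4 * A$4$3 + A$1$2 * A$2$3 * A$3$1 * A$4$4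
       - A$1$2 * A$2$3 * A$3$4 * A$4$1 - A$1$2 * A$2$4 * A$3$1 * A$4$3 + A$1$2 * A$2$4 * A$3$3 * A$4$1
       + A$1$3 * A$2$1 * A$3$2 * A$4$4 - A$1$3 * A$2$1 * A$3$4 * A$4$2 - A$1$3 * A$2$2 * A$3$1 * A$4$4
       + A$1$3 * A$2$2 * A$3$4 * A$4$1 + A$1$3 * A$2$4 * A$3$1 * A$4$2 - A$1$3 * A$2$4 * A$3$2 * A$4$1
       - A$1$4 * A$2$1 * A$3$2 * A$4$3 + A$1$4 * A$2$1 * A$3$3 * A$4$2 + A$1$4 * A$2$2 * A$3$1 * A$4$3
       - A$1$4 * A$2$2 * A$3$3 * A$4$1 - A$1$4 * A$2$3 * A$3$1 * A$4$2 + A$1$4 * A$2$3 * A$3$2 * A$4$1"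
proof -
  have f1: "finite {2::4, 3, 4}" "1 \<notin> {2::4, 3, 4}" by auto
  have f2: "finite {3::4, 4}" "2 \<notin> {3::4, 4}" by auto
  have f3: "finite {4::4}" "3 \<notin> {4::4}" by auto
  show ?thesis
    unfolding det_def UNIV_4 sum_over_permutations_insert[OF f1] sum_over_permutations_insert[OF f2]
      sum_over_permutations_insert[OF f3] permutes_sing
    by (simp add: sign_swap_id permutation_swap_id sign_compose permutation_compose sign_id
        swap_id_eq algebra_simps)
qed

lemma vector_4_nth [simp]:
  "(vector [a, b, c, d] :: 'a::zero^4) $ 1 = a" "(vector [a, b, c, d] :: 'a::zero^4) $ 2 = b"
  "(vector [a, b, c, d] :: 'a::zero^4) $ 3 = c" "(vector [a, b, c, d] :: 'a::zero^4) $ 4 = d"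
  unfolding vector_def by simp_all

lemma det_4_scale_rows:
  "det (vector [k1 *s a, k2 *s b, k3 *s u, k4 *s v] :: 'a::comm_ring_1^4^4)
     = k1 * k2 * k3 * k4 * det (vector [a, b, u, v] :: 'a^4^4)"
  by (simp add: det_4 algebra_simps)

lemma det_4_scaleR_rows_1_2:
  "det (vector [c1 *\<^sub>R a, c2 *\<^sub>R b, u, v] :: real^4^4) = c1 * c2 * det (vector [a, b, u, v] :: real^4^4)"
  by (simp add: det_4 algebra_simps)

lemma det_4_neg_rows_2_4:
  "det (vector [a, - b, c, - d] :: 'a::comm_ring_1^4^4) = det (vector [a, b, c, d] :: 'a^4^4)"
  by (simp add: det_4)

lemma matrix_mult_transpose_nth: "((A::real^'n^'m) ** transpose B) $ i $ j = A $ i \<bullet> B $ j"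
  by (simp add: matrix_matrix_mult_def transpose_def inner_vec_def mult.commute)

subsection \<open>Complex vectors\<close>

definition re_vec :: "complex^'n \<Rightarrow> real^'n" where
  "re_vec u = (\<chi> k. Re (u $ k))"

definition cnj_vec :: "complex^'n \<Rightarrow> complex^'n" where
  "cnj_vec u = (\<chi> k. cnj (u $ k))"

definition bdot :: "complex^'n \<Rightarrow> complex^'n \<Rightarrow> complex" where
  "bdot u w = (\<Sum>k\<in>UNIV. u $ k * w $ k)"

definition hdot :: "complex^'n \<Rightarrow> complex^'n \<Rightarrow> complex" where
  "hdot u w = (\<Sum>k\<in>UNIV. u $ k * cnj (w $ k))"

definition hgram :: "complex^'n \<Rightarrow> complex^'n \<Rightarrow> complex" where
  "hgram u w = hdot u u * hdot w w - hdot u w * hdot w u"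

lemma re_vec_nth [simp]: "re_vec u $ k = Re (u $ k)"
  by (simp add: re_vec_def)

lemma cnj_vec_nth [simp]: "cnj_vec u $ k = cnj (u $ k)"
  by (simp add: cnj_vec_def)

lemma re_vec_uminus [simp]: "re_vec (- u) = - re_vec u"
  by (simp add: vec_eq_iff)

lemma cnj_vec_smult: "cnj_vec (c *s u) = cnj c *s cnj_vec u"
  by (simp add: vec_eq_iff)

lemma bdot_smult_left [simp]: "bdot (c *s u) w = c * bdot u w"
  by (simp add: bdot_def sum_distrib_left mult.assoc)

lemma bdot_smult_right [simp]: "bdot u (c *s w) = c * bdot u w"
  by (simp add: bdot_def sum_distrib_left mult.left_commute)

lemma bdot_commute: "bdot u w = bdot w u"
  by (simp add: bdot_def mult.commute)

lemma hdot_smult_left [simp]: "hdot (c *s u) w = c * hdot u w"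
  by (simp add: hdot_def sum_distrib_left mult.assoc)

lemma hdot_smult_right [simp]: "hdot u (c *s w) = cnj c * hdot u w"
  by (simp add: hdot_def sum_distrib_left mult.left_commute)

lemma hdot_diff_left [simp]: "hdot (u - v) w = hdot u w - hdot v w"
  by (simp add: hdot_def sum_subtractf algebra_simps)

lemma hdot_diff_right [simp]: "hdot w (u - v) = hdot w u - hdot w v"
  by (simp add: hdot_def sum_subtractf algebra_simps)

lemma cnj_hdot: "cnj (hdot u w) = hdot w u"
  by (simp add: hdot_def mult.commute)

lemma hdot_self: "hdot u u = of_real (norm u ^ 2)"
  unfolding hdot_def complex_norm_square[symmetric] of_real_sum[symmetric]
  by (simp add: norm_vec_def L2_set_def sum_nonneg)

lemma inner_re_vec: "re_vec u \<bullet> re_vec w = (Re (bdot u w) + Re (hdot u w)) / 2"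
proof -
  have "Re (bdot u w) + Re (hdot u w) = (\<Sum>k\<in>UNIV. 2 * (Re (u $ k) * Re (w $ k)))"
    by (simp add: bdot_def hdot_def sum.distrib[symmetric] algebra_simps)
  then show ?thesis
    by (simp add: inner_vec_def sum_distrib_left[symmetric])
qed

lemma hgram_shift: "hgram u (w - c *s u) = hgram u w"
  by (simp add: hgram_def algebra_simps)

lemma hgram_scale: "hgram (k *s u) (k *s w) = (k * cnj k)\<^sup>2 * hgram u w"
  by (simp add: hgram_def algebra_simps power2_eq_square)

lemma det_cnj_frame_shift:
  "det (vector [u, cnj_vec u, w - c *s u, cnj_vec (w - c *s u)] :: complex^4^4)
     = det (vector [u, cnj_vec u, w, cnj_vec w])"
  by (simp add: det_4 algebra_simps)

lemma det_cnj_frame_scale: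
  "det (vector [k *s u, cnj_vec (k *s u), k *s w, cnj_vec (k *s w)] :: complex^4^4)
     = (k * cnj k)\<^sup>2 * det (vector [u, cnj_vec u, w, cnj_vec w])"
  unfolding cnj_vec_smult det_4_scale_rows by (simp add: power2_eq_square algebra_simps)

text \<open>The real and imaginary parts of \<open>u\<close> are \<open>(u + conj u)/2\<close> and \<open>(u - conj u)/(2\<i>)\<close>,
  so each of the two row pairs contributes the factor \<open>-1/(2\<i>)\<close>.\<close>

lemma det_re_vec:
  "complex_of_real (det (vector [re_vec u, re_vec (\<i> *s u), re_vec w, re_vec (\<i> *s w)] :: real^4^4))
     = - (1/4) * det (vector [u, cnj_vec u, w, cnj_vec w])"
proof -
  have complexify: "complex_of_real (det (vector [R, I, R', I'] :: real^4^4)) =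
     - (1/4) * det (vector [(\<chi> k. Complex (R$k) (I$k)), (\<chi> k. Complex (R$k) (- I$k)),
                           (\<chi> k. Complex (R'$k) (I'$k)), (\<chi> k. Complex (R'$k) (- I'$k))] :: complex^4^4)"
    for R I R' I' :: "real^4"
    apply (simp add: det_4 Complex_eq)
    using complex_i_mult_minus[of 1] by algebra
  define I where "I = (\<chi> k. Im (u $ k))"
  define I' where "I' = (\<chi> k. Im (w $ k))"
  have "re_vec (\<i> *s u) = - I" "re_vec (\<i> *s w) = - I'"
    by (simp_all add: vec_eq_iff I_def I'_def)
  moreover have "(\<chi> k. Complex (re_vec u $ k) (I $ k)) = u" "(\<chi> k. Complex (re_vec w $ k) (I' $ k)) = w"
    "(\<chi> k. Complex (re_vec u $ k) (- I $ k)) = cnj_vec u"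
    "(\<chi> k. Complex (re_vec w $ k) (- I' $ k)) = cnj_vec w"
    by (simp_all add: vec_eq_iff I_def I'_def complex_eq_iff)
  ultimately show ?thesis
    by (simp only: det_4_neg_rows_2_4 complexify)
qed

lemma has_derivative_re_vec:
  fixes f :: "complex \<Rightarrow> complex^'n"
  assumes "\<And>k. ((\<lambda>w. f w $ k) has_field_derivative (f' $ k)) (at z)"
  shows "((\<lambda>w. re_vec (f w)) has_derivative (\<lambda>h. re_vec (h *s f'))) (at z)"
proof -
  have "((\<lambda>w. re_vec (f w)) has_derivative (\<lambda>h. re_vec (h *s f'))) (at z within UNIV)"
  proof (subst has_derivative_componentwise_within, intro ballI)
    fix i :: "real^'n" assume "i \<in> Basis"
    then obtain k where i: "i = axis k 1" by (auto simp: Basis_vec_def)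
    have "((\<lambda>w. Re (f w $ k)) has_derivative (\<lambda>h. Re (f' $ k * h))) (at z)"
      using has_derivative_Re[OF assms[of k, unfolded has_field_derivative_def]] .
    then show "((\<lambda>w. re_vec (f w) \<bullet> i) has_derivative (\<lambda>h. re_vec (h *s f') \<bullet> i)) (at z within UNIV)"
      by (simp add: i inner_axis mult.commute)
  qed
  then show ?thesis by simp
qed

lemma bdot_deriv_eq_0_if_isotropic:
  assumes "open D" "z \<in> D" and isotropic: "\<And>w. w \<in> D \<Longrightarrow> bdot (P w) (P w) = 0"
    and deriv: "\<And>k. ((\<lambda>w. P w $ k) has_field_derivative P' $ k) (at z)"
  shows "bdot (P z) P' = 0"
proof -
  have "((\<lambda>w. bdot (P w) (P w)) has_field_derivative
          (\<Sum>k\<in>UNIV. P' $ k * P z $ k + P' $ k * P z $ k)) (at z)"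
    unfolding bdot_def by (intro DERIV_sum DERIV_mult deriv)
  moreover have "((\<lambda>w. bdot (P w) (P w)) has_field_derivative 0) (at z)"
    by (rule has_field_derivative_transform_within_open[OF DERIV_const assms(1,2)])
       (simp add: isotropic)
  ultimately have "(\<Sum>k\<in>UNIV. P' $ k * P z $ k + P' $ k * P z $ k) = 0"
    by (rule DERIV_unique)
  then show ?thesis
    by (simp add: bdot_def sum.distrib mult.commute sum_distrib_left[symmetric])
qed

subsection \<open>Conformally parametrised surfaces in \<open>\<real>\<^sup>4\<close>\<close>

lemma tan_proj_conformal:
  assumes "fff_F x z = 0" "fff_G x z = fff_E x z" "fff_E x z \<noteq> 0"
  shows "tan_proj x z w = ((w \<bullet> pdu x z) / fff_E x z) *\<^sub>R pdu x z
                          + ((w \<bullet> pdv x z) / fff_E x z) *\<^sub>R pdv x z"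
  using assms by (simp add: tan_proj_def Let_def power2_eq_square)

lemma inner_nor_proj_conformal:
  assumes "fff_F x z = 0" "fff_G x z = fff_E x z" "fff_E x z \<noteq> 0"
  shows "nor_proj x z u \<bullet> nor_proj x z w = u \<bullet> w - (u \<bullet> pdu x z) * (w \<bullet> pdu x z) / fff_E x z
           - (u \<bullet> pdv x z) * (w \<bullet> pdv x z) / fff_E x z"
proof -
  define p1 p2 E where "p1 = pdu x z" and "p2 = pdv x z" and "E = fff_E x z"
  have "p1 \<bullet> p1 = E" "p2 \<bullet> p2 = E" "p1 \<bullet> p2 = 0" "p2 \<bullet> p1 = 0" "E \<noteq> 0"
    using assms by (auto simp: p1_def p2_def E_def fff_E_def fff_F_def fff_G_def inner_commute)
  then show ?thesis
    unfolding nor_proj_def tan_proj_conformal[OF assms] p1_def[symmetric] p2_def[symmetric] E_def[symmetric]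
    by (simp add: inner_diff_left inner_diff_right inner_add_left inner_add_right inner_commute
        field_simps power2_eq_square)
qed

lemma normal_curvature_conformal:
  assumes conformal: "fff_F x z = 0" "fff_G x z = fff_E x z" "fff_E x z > 0"
    and n1: "pdu n1 z \<bullet> pdu x z = - a1" "pdu n1 z \<bullet> pdv x z = - b1"
            "pdv n1 z \<bullet> pdu x z = - b1" "pdv n1 z \<bullet> pdv x z = a1"
    and n2: "pdu n2 z \<bullet> pdu x z = - a2" "pdu n2 z \<bullet> pdv x z = - b2"
            "pdv n2 z \<bullet> pdu x z = - b2" "pdv n2 z \<bullet> pdv x z = a2"
  shows "normal_curvature x n1 n2 z = 2 / (fff_E x z)\<^sup>2 * (a1 * b2 - b1 * a2)"
proof -
  define p1 p2 E where "p1 = pdu x z" and "p2 = pdv x z" and "E = fff_E x z"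
  have h: "p1 \<bullet> p1 = E" "p2 \<bullet> p2 = E" "p1 \<bullet> p2 = 0" "p2 \<bullet> p1 = 0" "E > 0"
    using conformal by (auto simp: p1_def p2_def E_def fff_E_def fff_F_def fff_G_def inner_commute)
  then have "norm p1 = sqrt E" "norm p2 = sqrt E" "sqrt E * sqrt E = E"
    by (simp_all add: norm_eq_sqrt_inner)
  with h n1 n2 show ?thesis
    unfolding normal_curvature_def weingarten_X1_def weingarten_X2_def
      tan_proj_conformal[OF conformal(1,2) less_imp_neq[OF conformal(3), symmetric]]
      p1_def[symmetric] p2_def[symmetric] E_def[symmetric]
    by (simp add: inner_add_left inner_add_right inner_diff_left inner_diff_right inner_commute
        field_simps power2_eq_square)
qed

text \<open>Differentiating \<open>n \<bullet> x\<^sub>u = 0\<close> and \<open>n \<bullet> x\<^sub>v = 0\<close> moves the derivative onto \<open>x\<close>.\<close>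

lemma inner_pd_normal:
  assumes "open D" "z \<in> D" and nd: "n differentiable (at z)"
    and orth_u: "\<And>w. w \<in> D \<Longrightarrow> n w \<bullet> pdu x w = 0"
    and orth_v: "\<And>w. w \<in> D \<Longrightarrow> n w \<bullet> pdv x w = 0"
    and du: "(pdu x has_derivative (\<lambda>h. re_vec (h *s P'))) (at z)"
    and dv: "(pdv x has_derivative (\<lambda>h. re_vec (h *s (\<i> *s P')))) (at z)"
  shows "pdu n z \<bullet> pdu x z = - (n z \<bullet> re_vec P')" "pdu n z \<bullet> pdv x z = - (n z \<bullet> re_vec (\<i> *s P'))"
        "pdv n z \<bullet> pdu x z = - (n z \<bullet> re_vec (\<i> *s P'))" "pdv n z \<bullet> pdv x z = n z \<bullet> re_vec P'"
proof -
  define n' where "n' = frechet_derivative n (at z)"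
  have nd': "(n has_derivative n') (at z)"
    using nd by (simp add: n'_def frechet_derivative_works)
  have const_u: "((\<lambda>w. n w \<bullet> pdu x w) has_derivative (\<lambda>h. 0)) (at z)"
    by (rule has_derivative_transform_within_open[OF has_derivative_const assms(1,2)])
       (simp add: orth_u)
  have const_v: "((\<lambda>w. n w \<bullet> pdv x w) has_derivative (\<lambda>h. 0)) (at z)"
    by (rule has_derivative_transform_within_open[OF has_derivative_const assms(1,2)])
       (simp add: orth_v)
  have eu: "(\<lambda>h. n z \<bullet> re_vec (h *s P') + n' h \<bullet> pdu x z) = (\<lambda>h. 0)"
    using has_derivative_unique[OF has_derivative_inner[OF nd' du] const_u] .
  have ev: "(\<lambda>h. n z \<bullet> re_vec (h *s (\<i> *s P')) + n' h \<bullet> pdv x z) = (\<lambda>h. 0)"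
    using has_derivative_unique[OF has_derivative_inner[OF nd' dv] const_v] .
  have "pdu n z = n' 1" "pdv n z = n' \<i>"
    by (simp_all add: pdu_def pdv_def n'_def)
  with fun_cong[OF eu, of 1] fun_cong[OF eu, of \<i>] fun_cong[OF ev, of 1] fun_cong[OF ev, of \<i>]
  show "pdu n z \<bullet> pdu x z = - (n z \<bullet> re_vec P')" "pdv n z \<bullet> pdu x z = - (n z \<bullet> re_vec (\<i> *s P'))"
       "pdu n z \<bullet> pdv x z = - (n z \<bullet> re_vec (\<i> *s P'))" "pdv n z \<bullet> pdv x z = n z \<bullet> re_vec P'"
    by (simp_all add: algebra_simps)
qed

lemma orthonormal4_tangent_normal:
  assumes "orthonormal4 (unitX1 x w) (unitX2 x w) n1 n2"
  shows "n1 \<bullet> pdu x w = 0" "n1 \<bullet> pdv x w = 0" "n2 \<bullet> pdu x w = 0" "n2 \<bullet> pdv x w = 0"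
proof -
  have unit: "unitX1 x w \<bullet> unitX1 x w = 1" "unitX2 x w \<bullet> unitX2 x w = 1"
    and orth: "unitX1 x w \<bullet> n1 = 0" "unitX1 x w \<bullet> n2 = 0" "unitX2 x w \<bullet> n1 = 0" "unitX2 x w \<bullet> n2 = 0"
    using assms by (auto simp: orthonormal4_def)
  have "pdu x w \<noteq> 0" "pdv x w \<noteq> 0"
    using unit by (auto simp: unitX1_def unitX2_def)
  with orth show "n1 \<bullet> pdu x w = 0" "n1 \<bullet> pdv x w = 0" "n2 \<bullet> pdu x w = 0" "n2 \<bullet> pdv x w = 0"
    by (simp_all add: unitX1_def unitX2_def inner_commute)
qed

text \<open>Expanding in a positively oriented orthonormal frame \<open>(e\<^sub>1,\<dots>,e\<^sub>4)\<close>, whose matrix has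
  determinant \<open>1\<close>, turns the \<open>2\<times>2\<close> minor of normal components into a \<open>4\<times>4\<close> determinant.\<close>

lemma det_oriented_orthonormal_frame:
  assumes "orthonormal4 e1 e2 e3 e4" and "pos_oriented e1 e2 e3 e4"
  shows "(e3 \<bullet> u) * (e4 \<bullet> v) - (e3 \<bullet> v) * (e4 \<bullet> u) = det (vector [e1, e2, u, v] :: real^4^4)"
proof -
  define M where "M = (vector [e1, e2, e3, e4] :: real^4^4)"
  have oo: "e1 \<bullet> e1 = 1" "e2 \<bullet> e2 = 1" "e3 \<bullet> e3 = 1" "e4 \<bullet> e4 = 1"
     "e1 \<bullet> e2 = 0" "e1 \<bullet> e3 = 0" "e1 \<bullet> e4 = 0" "e2 \<bullet> e3 = 0" "e2 \<bullet> e4 = 0" "e3 \<bullet> e4 = 0"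
     "e2 \<bullet> e1 = 0" "e3 \<bullet> e1 = 0" "e4 \<bullet> e1 = 0" "e3 \<bullet> e2 = 0" "e4 \<bullet> e2 = 0" "e4 \<bullet> e3 = 0"
    using assms(1) by (auto simp: orthonormal4_def inner_commute)
  have "det (M ** transpose M) = 1"
    unfolding det_4 matrix_mult_transpose_nth M_def using oo by simp
  then have "det M * det M = 1"
    by (simp add: det_mul)
  moreover have "det M > 0"
    using assms(2) by (simp add: pos_oriented_def M_def)
  ultimately have "det M = 1"
    by (metis abs_of_pos abs_square_eq_1 power2_eq_square)
  moreover have "det (M ** transpose (vector [e1, e2, u, v])) = (e3 \<bullet> u) * (e4 \<bullet> v) - (e3 \<bullet> v) * (e4 \<bullet> u)"
    using oo by (simp add: det_4 M_def matrix_mult_transpose_nth algebra_simps)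
  ultimately show ?thesis
    by (simp add: det_mul)
qed

locale isotropic_re_surface =
  fixes D :: "complex set" and \<Psi> \<Phi> \<Phi>' :: "complex \<Rightarrow> complex^4" and x :: "complex \<Rightarrow> real^4"
  assumes open_D: "open D"
    and x_eq: "x = (\<lambda>z. re_vec (\<Psi> z))"
    and \<Psi>_deriv: "\<And>z k. z \<in> D \<Longrightarrow> ((\<lambda>w. \<Psi> w $ k) has_field_derivative \<Phi> z $ k) (at z)"
    and \<Phi>_deriv: "\<And>z k. z \<in> D \<Longrightarrow> ((\<lambda>w. \<Phi> w $ k) has_field_derivative \<Phi>' z $ k) (at z)"
    and isotropic: "\<And>z. z \<in> D \<Longrightarrow> bdot (\<Phi> z) (\<Phi> z) = 0"
    and nonzero: "\<And>z. z \<in> D \<Longrightarrow> \<Phi> z \<noteq> 0"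
begin

lemma has_derivative_x: "z \<in> D \<Longrightarrow> (x has_derivative (\<lambda>h. re_vec (h *s \<Phi> z))) (at z)"
  unfolding x_eq by (rule has_derivative_re_vec) (rule \<Psi>_deriv)

lemma pdu_x: "z \<in> D \<Longrightarrow> pdu x z = re_vec (\<Phi> z)"
  and pdv_x: "z \<in> D \<Longrightarrow> pdv x z = re_vec (\<i> *s \<Phi> z)"
  by (simp_all add: pdu_def pdv_def frechet_derivative_at[OF has_derivative_x, symmetric])

lemma has_derivative_pdu_x: "z \<in> D \<Longrightarrow> (pdu x has_derivative (\<lambda>h. re_vec (h *s \<Phi>' z))) (at z)"
  by (rule has_derivative_transform_within_open[OF has_derivative_re_vec[OF \<Phi>_deriv] open_D])
     (simp_all add: pdu_x)

lemma has_derivative_pdv_x: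
  "z \<in> D \<Longrightarrow> (pdv x has_derivative (\<lambda>h. re_vec (h *s (\<i> *s \<Phi>' z)))) (at z)"
  by (rule has_derivative_transform_within_open[OF has_derivative_re_vec open_D])
     (simp_all add: pdv_x DERIV_cmult[OF \<Phi>_deriv])

lemma pdu_pdu_x: "z \<in> D \<Longrightarrow> pdu (pdu x) z = re_vec (\<Phi>' z)"
  and pdv_pdu_x: "z \<in> D \<Longrightarrow> pdv (pdu x) z = re_vec (\<i> *s \<Phi>' z)"
  and pdv_pdv_x: "z \<in> D \<Longrightarrow> pdv (pdv x) z = - re_vec (\<Phi>' z)"
  by (simp_all add: pdu_def pdv_def
      frechet_derivative_at[OF has_derivative_pdu_x, symmetric]
      frechet_derivative_at[OF has_derivative_pdv_x, symmetric])

lemma first_fundamental_form: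
  assumes "z \<in> D"
  shows "fff_E x z = norm (\<Phi> z) ^ 2 / 2" "fff_F x z = 0" "fff_G x z = fff_E x z"
  using assms by (simp_all add: fff_E_def fff_F_def fff_G_def pdu_x pdv_x inner_re_vec isotropic
      hdot_self[of "\<Phi> z"])

lemma fff_E_pos:
  assumes "z \<in> D"
  shows "fff_E x z > 0"
  unfolding first_fundamental_form(1)[OF assms] using nonzero[OF assms] by simp

lemma gauss_curvature_eq:
  assumes z: "z \<in> D"
  shows "gauss_curvature x z = - 4 * Re (hgram (\<Phi> z) (\<Phi>' z)) / norm (\<Phi> z) ^ 6"
proof -
  define P P' m h where "P = \<Phi> z" and "P' = \<Phi>' z" and "m = norm P ^ 2" and "h = hdot P' P"
  have m: "m > 0"
    using nonzero[OF z] by (simp add: m_def P_def)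
  have "bdot P P' = 0"
    unfolding P_def P'_def by (rule bdot_deriv_eq_0_if_isotropic[OF open_D z isotropic \<Phi>_deriv[OF z]])
  then have bdot: "bdot P P' = 0" "bdot P' P = 0"
    by (simp_all add: bdot_commute)
  have hdot: "hdot P P = of_real m" "hdot P P' = cnj h"
    by (simp_all add: m_def hdot_self h_def cnj_hdot)
  have E: "fff_E x z = m / 2" "fff_F x z = 0" "fff_G x z = fff_E x z"
    using first_fundamental_form[OF z] by (simp_all add: m_def P_def)
  have Ene: "fff_E x z \<noteq> 0"
    using E(1) m by simp
  have "gauss_curvature x z = - (Re (hdot P' P') - (Re h ^ 2 + Im h ^ 2) / m) / (m / 2)\<^sup>2"
    unfolding gauss_curvature_def inner_nor_proj_conformal[OF E(2,3) Ene] E(2,3)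
      pdu_x[OF z] pdv_x[OF z] pdu_pdu_x[OF z] pdv_pdu_x[OF z] pdv_pdv_x[OF z]
      P_def[symmetric] P'_def[symmetric] E(1)
    using m by (simp add: inner_re_vec bdot hdot h_def[symmetric] field_simps power2_eq_square)
  moreover have "Re (hgram P P') = m * Re (hdot P' P') - (Re h ^ 2 + Im h ^ 2)"
    by (simp add: hgram_def hdot h_def[symmetric] power2_eq_square)
  moreover have "norm P ^ 6 = m ^ 3"
    by (simp add: m_def flip: power_mult)
  ultimately show ?thesis
    using m by (simp add: P_def[symmetric] P'_def[symmetric] field_simps power2_eq_square power3_eq_cube)
qed

lemma normal_curvature_eq:
  assumes z: "z \<in> D"
    and differentiable: "n1 differentiable (at z)" "n2 differentiable (at z)"
    and frame: "\<And>w. w \<in> D \<Longrightarrow> orthonormal4 (unitX1 x w) (unitX2 x w) (n1 w) (n2 w)"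
    and oriented: "pos_oriented (unitX1 x z) (unitX2 x z) (n1 z) (n2 z)"
  shows "normal_curvature x n1 n2 z
           = - 4 * Re (det (vector [\<Phi> z, cnj_vec (\<Phi> z), \<Phi>' z, cnj_vec (\<Phi>' z)] :: complex^4^4))
             / norm (\<Phi> z) ^ 6"
proof -
  note tangent_normal = orthonormal4_tangent_normal[OF frame]
  note n1 = inner_pd_normal[OF open_D z differentiable(1) tangent_normal(1,2)
      has_derivative_pdu_x[OF z] has_derivative_pdv_x[OF z]]
  note n2 = inner_pd_normal[OF open_D z differentiable(2) tangent_normal(3,4)
      has_derivative_pdu_x[OF z] has_derivative_pdv_x[OF z]]
  have E: "fff_E x z = norm (\<Phi> z) ^ 2 / 2" and E_pos: "fff_E x z > 0"
    using first_fundamental_form(1)[OF z] fff_E_pos[OF z] .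
  have "norm (pdu x z) = sqrt (fff_E x z)" "norm (pdv x z) = sqrt (fff_E x z)"
    using first_fundamental_form[OF z] by (simp_all add: fff_E_def fff_G_def norm_eq_sqrt_inner)
  then have "det (vector [unitX1 x z, unitX2 x z, re_vec (\<Phi>' z), re_vec (\<i> *s \<Phi>' z)] :: real^4^4)
      = det (vector [re_vec (\<Phi> z), re_vec (\<i> *s \<Phi> z), re_vec (\<Phi>' z), re_vec (\<i> *s \<Phi>' z)]
              :: real^4^4) / fff_E x z"
    using E_pos z unfolding unitX1_def unitX2_def det_4_scaleR_rows_1_2
    by (simp add: pdu_x pdv_x field_simps)
  also have "\<dots> = - Re (det (vector [\<Phi> z, cnj_vec (\<Phi> z), \<Phi>' z, cnj_vec (\<Phi>' z)] :: complex^4^4))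
                    / (4 * fff_E x z)"
    using arg_cong[OF det_re_vec[of "\<Phi> z" "\<Phi>' z"], of Re] by simp
  finally have "normal_curvature x n1 n2 z = 2 / (fff_E x z)\<^sup>2 *
      (- Re (det (vector [\<Phi> z, cnj_vec (\<Phi> z), \<Phi>' z, cnj_vec (\<Phi>' z)] :: complex^4^4))
       / (4 * fff_E x z))"
    by (simp only: normal_curvature_conformal[OF first_fundamental_form(2,3)[OF z] E_pos n1 n2]
        det_oriented_orthonormal_frame[OF frame[OF z] oriented])
  moreover have "norm (\<Phi> z) ^ 6 = (2 * fff_E x z) ^ 3"
    by (simp add: E flip: power_mult)
  ultimately show ?thesis
    using E_pos by (simp add: field_simps power2_eq_square power3_eq_cube)
qed

end

subsection \<open>The Weierstrass curve\<close>

text \<open>\<open>\<Phi> = weier_vec g\<^sub>1 g\<^sub>2 / \<surd>(g\<^sub>1'g\<^sub>2')\<close>, and \<open>weier_vec_deriv A B a b\<close> is the derivative of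
  \<open>weier_vec A B\<close> when \<open>A' = a\<close> and \<open>B' = b\<close>.\<close>

definition weier_vec :: "complex \<Rightarrow> complex \<Rightarrow> complex^4" where
  "weier_vec A B = vector [(\<i>/2) * (A * B + 1), (1/2) * (A * B - 1), (1/2) * (A + B), (\<i>/2) * (A - B)]"

definition weier_vec_deriv :: "complex \<Rightarrow> complex \<Rightarrow> complex \<Rightarrow> complex \<Rightarrow> complex^4" where
  "weier_vec_deriv A B a b =
     vector [(\<i>/2) * (a * B + A * b), (1/2) * (a * B + A * b), (1/2) * (a + b), (\<i>/2) * (a - b)]"

lemma has_field_derivative_weier_vec:
  assumes "(g1 has_field_derivative a) (at z)" "(g2 has_field_derivative b) (at z)"
  shows "((\<lambda>w. weier_vec (g1 w) (g2 w) $ k) has_field_derivative weier_vec_deriv (g1 z) (g2 z) a b $ k) (at z)"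
proof -
  have "k = 1 \<or> k = 2 \<or> k = 3 \<or> k = 4" by (rule exhaust_4)
  then show ?thesis
    by (elim disjE) (auto simp: weier_vec_def weier_vec_deriv_def intro!: derivative_eq_intros assms)
qed

lemma has_field_derivative_weierstrass_curve:
  assumes "(g1 has_field_derivative a) (at z)" "(g2 has_field_derivative b) (at z)"
    and "(s has_field_derivative \<sigma>') (at z)" "s z \<noteq> 0"
  shows "((\<lambda>w. ((1 / s w) *s weier_vec (g1 w) (g2 w)) $ k) has_field_derivative
           ((1 / s z) *s weier_vec_deriv (g1 z) (g2 z) a b
            - (\<sigma>' / s z) *s ((1 / s z) *s weier_vec (g1 z) (g2 z))) $ k) (at z)"
proof -
  have "((\<lambda>w. weier_vec (g1 w) (g2 w) $ k / s w) has_field_derivative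
          (weier_vec_deriv (g1 z) (g2 z) a b $ k * s z - weier_vec (g1 z) (g2 z) $ k * \<sigma>') / (s z * s z)) (at z)"
    using DERIV_divide[OF has_field_derivative_weier_vec[OF assms(1,2)] assms(3)] assms(4) by simp
  then show ?thesis
    using assms(4) by (simp add: field_simps)
qed

lemma weier_vec_nonzero: "weier_vec A B \<noteq> 0"
proof
  assume "weier_vec A B = 0"
  then have "weier_vec A B $ 1 = 0" "weier_vec A B $ 2 = 0"
    by simp_all
  then show False
    by (simp add: weier_vec_def)
qed

lemma bdot_weier_vec: "bdot (weier_vec A B) (weier_vec A B) = 0"
  by (simp add: bdot_def weier_vec_def sum_4 field_simps complex_i_mult_minus)

lemma hdot_weier_vec: "hdot (weier_vec A B) (weier_vec A B) = of_real ((cmod A ^ 2 + 1) * (cmod B ^ 2 + 1) / 2)"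
proof -
  have "hdot (weier_vec A B) (weier_vec A B) * 2 = (A * cnj A + 1) * (B * cnj B + 1)"
    by (simp add: hdot_def weier_vec_def sum_4 field_simps complex_i_mult_minus)
  then show ?thesis
    by (simp add: complex_norm_square[symmetric] field_simps)
qed

lemma hgram_weier_vec:
  "hgram (weier_vec A B) (weier_vec_deriv A B a b)
     = of_real ((cmod a ^ 2 * (cmod B ^ 2 + 1)\<^sup>2 + cmod b ^ 2 * (cmod A ^ 2 + 1)\<^sup>2) / 4)"
proof -
  define V V' where "V = weier_vec A B" and "V' = weier_vec_deriv A B a b"
  have "hdot V V * 2 = (A * cnj A + 1) * (B * cnj B + 1)"
    and "hdot V V' * 2 = cnj a * A * (cnj B * B + 1) + cnj b * B * (cnj A * A + 1)"
    and "hdot V' V * 2 = a * cnj A * (B * cnj B + 1) + b * cnj B * (A * cnj A + 1)"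
    and "hdot V' V' * 2 = a * cnj a * (B * cnj B + 1) + b * cnj b * (A * cnj A + 1)
                          + a * cnj b * cnj A * B + cnj a * b * A * cnj B"
    by (simp_all add: V_def V'_def hdot_def weier_vec_def weier_vec_deriv_def sum_4 field_simps
        complex_i_mult_minus)
  then have "hgram V V' * 4 = a * cnj a * (B * cnj B + 1)\<^sup>2 + b * cnj b * (A * cnj A + 1)\<^sup>2"
    unfolding hgram_def by (simp add: field_simps power2_eq_square) algebra
  then show ?thesis
    by (simp add: V_def V'_def complex_norm_square[symmetric] field_simps)
qed

lemma det_weier_vec:
  "det (vector [weier_vec A B, cnj_vec (weier_vec A B), weier_vec_deriv A B a b,
                cnj_vec (weier_vec_deriv A B a b)] :: complex^4^4)
     = - of_real ((cmod a ^ 2 * (cmod B ^ 2 + 1)\<^sup>2 - cmod b ^ 2 * (cmod A ^ 2 + 1)\<^sup>2) / 4)"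
proof -
  have "det (vector [weier_vec A B, cnj_vec (weier_vec A B), weier_vec_deriv A B a b,
                cnj_vec (weier_vec_deriv A B a b)] :: complex^4^4) * 4
     = - (a * cnj a * (B * cnj B + 1)\<^sup>2 - b * cnj b * (A * cnj A + 1)\<^sup>2)"
    by (simp add: det_4 cnj_vec_def weier_vec_def weier_vec_deriv_def field_simps complex_i_mult_minus
        power2_eq_square)
  then show ?thesis
    by (simp add: complex_norm_square[symmetric] field_simps)
qed

text \<open>Here \<open>\<sigma>\<close> and \<open>\<sigma>'\<close> stand for \<open>\<surd>(g\<^sub>1'g\<^sub>2')\<close> and its derivative at a point, and \<open>\<Phi>'\<close> is
  the derivative of \<open>\<Phi>\<close> computed by the quotient rule.\<close>

lemma weierstrass_curve_invariants:
  fixes A B a b \<sigma> \<sigma>' :: complex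
  assumes \<sigma>: "\<sigma>\<^sup>2 = a * b" "a * b \<noteq> 0"
    and \<Phi>: "\<Phi> = (1 / \<sigma>) *s weier_vec A B"
    and \<Phi>': "\<Phi>' = (1 / \<sigma>) *s weier_vec_deriv A B a b - (\<sigma>' / \<sigma>) *s \<Phi>"
  shows "norm \<Phi> ^ 2 / 2 = (cmod A ^ 2 + 1) * (cmod B ^ 2 + 1) / (4 * cmod (a * b))"
    and "- 4 * Re (hgram \<Phi> \<Phi>') / norm \<Phi> ^ 6
           = (- 8 * cmod (a * b)) / ((cmod A ^ 2 + 1) * (cmod B ^ 2 + 1))
             * (cmod a ^ 2 / (cmod A ^ 2 + 1)\<^sup>2 + cmod b ^ 2 / (cmod B ^ 2 + 1)\<^sup>2)"
    and "- 4 * Re (det (vector [\<Phi>, cnj_vec \<Phi>, \<Phi>', cnj_vec \<Phi>'] :: complex^4^4)) / norm \<Phi> ^ 6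
           = 8 * cmod (a * b) / ((cmod A ^ 2 + 1) * (cmod B ^ 2 + 1))
             * (cmod a ^ 2 / (cmod A ^ 2 + 1)\<^sup>2 - cmod b ^ 2 / (cmod B ^ 2 + 1)\<^sup>2)"
proof -
  define S PA PB where "S = cmod (a * b)" and "PA = cmod A ^ 2 + 1" and "PB = cmod B ^ 2 + 1"
  have pos: "S > 0" "PA > 0" "PB > 0"
    using \<sigma>(2) by (simp_all add: S_def PA_def PB_def add_nonneg_pos)
  have "cmod \<sigma> ^ 2 = S"
    using \<sigma>(1) by (metis S_def norm_power)
  then have \<sigma>_cnj: "\<sigma> * cnj \<sigma> = of_real S" "cnj \<sigma> * \<sigma> = of_real S"
    by (metis complex_norm_square, metis complex_norm_square mult.commute)
  then have scale: "(1 / \<sigma>) * cnj (1 / \<sigma>) = of_real (1 / S)"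
    by simp
  have "of_real (norm \<Phi> ^ 2) = (complex_of_real (PA * PB / (2 * S)))"
    unfolding hdot_self[symmetric] \<Phi> hdot_smult_left hdot_smult_right mult.assoc[symmetric]
      scale hdot_weier_vec
    by (simp add: PA_def PB_def \<sigma>_cnj)
  then have norm: "norm \<Phi> ^ 2 = PA * PB / (2 * S)"
    using of_real_eq_iff by blast
  have hgram: "Re (hgram \<Phi> \<Phi>') = (cmod a ^ 2 * PB\<^sup>2 + cmod b ^ 2 * PA\<^sup>2) / (4 * S\<^sup>2)"
    unfolding \<Phi>' hgram_shift unfolding \<Phi> hgram_scale scale hgram_weier_vec
      of_real_power[symmetric] of_real_mult[symmetric] Re_complex_of_real
    using pos(1) by (simp add: PA_def PB_def field_simps)
  have det: "Re (det (vector [\<Phi>, cnj_vec \<Phi>, \<Phi>', cnj_vec \<Phi>'] :: complex^4^4))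
      = - (cmod a ^ 2 * PB\<^sup>2 - cmod b ^ 2 * PA\<^sup>2) / (4 * S\<^sup>2)"
    unfolding \<Phi>' det_cnj_frame_shift unfolding \<Phi> det_cnj_frame_scale scale det_weier_vec
      of_real_minus[symmetric] of_real_power[symmetric] of_real_mult[symmetric] Re_complex_of_real
    using pos(1) by (simp add: PA_def PB_def field_simps)
  have norm6: "norm \<Phi> ^ 6 = (PA * PB / (2 * S)) ^ 3"
    unfolding norm[symmetric] by (simp flip: power_mult)
  show "norm \<Phi> ^ 2 / 2 = PA * PB / (4 * S)"
    by (simp add: norm)
  show "- 4 * Re (hgram \<Phi> \<Phi>') / norm \<Phi> ^ 6
           = (- 8 * S) / (PA * PB) * (cmod a ^ 2 / PA\<^sup>2 + cmod b ^ 2 / PB\<^sup>2)"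
    and "- 4 * Re (det (vector [\<Phi>, cnj_vec \<Phi>, \<Phi>', cnj_vec \<Phi>'] :: complex^4^4)) / norm \<Phi> ^ 6
           = 8 * S / (PA * PB) * (cmod a ^ 2 / PA\<^sup>2 - cmod b ^ 2 / PB\<^sup>2)"
    unfolding hgram det norm6 using pos by (simp_all add: field_simps power2_eq_square power3_eq_cube)
qed


theorem mainTheorem5:
  fixes D :: "complex set"
    and g1 g2 s :: "complex \<Rightarrow> complex"
    and \<Phi> \<Psi> :: "complex \<Rightarrow> complex^4"
    and x :: "complex \<Rightarrow> real^4"
  assumes "open D" and "connected D"
    and "g1 holomorphic_on D" and "g2 holomorphic_on D"
    and "\<forall>z\<in>D. deriv g1 z * deriv g2 z \<noteq> 0"
    and "s holomorphic_on D"
    and "\<forall>z\<in>D. (s z)\<^sup>2 = deriv g1 z * deriv g2 z"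
    and "\<forall>z. \<Phi> z = vector
           [ (\<i>/2) * (g1 z * g2 z + 1) / s z,
             (1/2) * (g1 z * g2 z - 1) / s z,
             (1/2) * (g1 z + g2 z) / s z,
             (\<i>/2) * (g1 z - g2 z) / s z ]"
    and "\<forall>z\<in>D. \<forall>k. ((\<lambda>w. \<Psi> w $ k) has_field_derivative (\<Phi> z $ k)) (at z)"
    and "\<forall>z. x z = (\<chi> k. Re (\<Psi> z $ k))"
  shows "(\<forall>z\<in>D.
           fff_E x z = (cmod (g1 z)^2 + 1) * (cmod (g2 z)^2 + 1)
                       / (4 * cmod (deriv g1 z * deriv g2 z))
         \<and> fff_F x z = 0
         \<and> fff_G x z = fff_E x z
         \<and> gauss_curvature x z =
             (- 8 * cmod (deriv g1 z * deriv g2 z))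
               / ((cmod (g1 z)^2 + 1) * (cmod (g2 z)^2 + 1))
             * (cmod (deriv g1 z)^2 / (cmod (g1 z)^2 + 1)^2
                + cmod (deriv g2 z)^2 / (cmod (g2 z)^2 + 1)^2))
         \<and> (\<forall>n1 n2 :: complex \<Rightarrow> real^4.
           (\<forall>w\<in>D. n1 differentiable (at w) \<and> n2 differentiable (at w)) \<and>
           (\<forall>w\<in>D. orthonormal4 (unitX1 x w) (unitX2 x w) (n1 w) (n2 w)) \<and>
           (\<forall>w\<in>D. pos_oriented (unitX1 x w) (unitX2 x w) (n1 w) (n2 w))
           \<longrightarrow> (\<forall>z\<in>D. normal_curvature x n1 n2 z =
                 8 * cmod (deriv g1 z * deriv g2 z)
                   / ((cmod (g1 z)^2 + 1) * (cmod (g2 z)^2 + 1))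
                 * (cmod (deriv g1 z)^2 / (cmod (g1 z)^2 + 1)^2
                    - cmod (deriv g2 z)^2 / (cmod (g2 z)^2 + 1)^2)))"
proof -
  have s_nonzero: "s w \<noteq> 0" if "w \<in> D" for w
    using assms(5,7) that by (metis zero_power2)
  have \<Phi>_eq: "\<Phi> w = (1 / s w) *s weier_vec (g1 w) (g2 w)" for w
    using assms(8) by (simp add: vec_eq_iff forall_4 weier_vec_def)
  define \<Phi>' where "\<Phi>' w = (1 / s w) *s weier_vec_deriv (g1 w) (g2 w) (deriv g1 w) (deriv g2 w)
                           - (deriv s w / s w) *s \<Phi> w" for w
  interpret isotropic_re_surface D \<Psi> \<Phi> \<Phi>' x
  proof
    show "open D" by (fact assms(1))
    show "x = (\<lambda>z. re_vec (\<Psi> z))"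
      using assms(10) by (auto simp: re_vec_def)
    show "((\<lambda>w. \<Psi> w $ k) has_field_derivative \<Phi> z $ k) (at z)" if "z \<in> D" for z k
      using assms(9) that by blast
    show "((\<lambda>w. \<Phi> w $ k) has_field_derivative \<Phi>' z $ k) (at z)" if "z \<in> D" for z k
      unfolding \<Phi>_eq \<Phi>'_def
      using assms(1,3,4,6) that s_nonzero
      by (intro has_field_derivative_weierstrass_curve holomorphic_derivI) auto
    show "bdot (\<Phi> z) (\<Phi> z) = 0" for z
      by (simp add: \<Phi>_eq bdot_weier_vec)
    show "\<Phi> z \<noteq> 0" if "z \<in> D" for z
      using that s_nonzero weier_vec_nonzero by (simp add: \<Phi>_eq vec_eq_iff)
  qed
  note invariants =
    weierstrass_curve_invariants[OF assms(7)[rule_format] assms(5)[rule_format] \<Phi>_eq \<Phi>'_def]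
  show ?thesis
  proof (intro conjI ballI allI impI, goal_cases)
    case (1 z) then show ?case by (simp add: first_fundamental_form invariants)
  next
    case (2 z) then show ?case by (simp add: first_fundamental_form)
  next
    case (3 z) then show ?case by (simp add: first_fundamental_form)
  next
    case (4 z) then show ?case using invariants(2)[OF 4 4] by (simp only: gauss_curvature_eq)
  next
    case (5 n1 n2 z)
    then have z: "z \<in> D"
      and differentiable: "n1 differentiable (at z)" "n2 differentiable (at z)"
      and frame: "\<And>w. w \<in> D \<Longrightarrow> orthonormal4 (unitX1 x w) (unitX2 x w) (n1 w) (n2 w)"
      and oriented: "pos_oriented (unitX1 x z) (unitX2 x z) (n1 z) (n2 z)"
      by auto
    show ?case
      using invariants(3)[OF z z] by (simp only: normal_curvature_eq[OF z differentiable frame oriented])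
  qed
qed

end
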